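(* Let $D$ be an integral domain and $\star$ a semistar operation on $D$. If $D[X]$ is $\star[X]$-catenarian (i.e. $\star[X]$-catenary), then $D$ is a $\widetilde{\star}$-strong S-domain.
   Context: Let $D$ be an integral domain with quotient field $K$, $\overline{\mathcal{F}}(D)$ the set of nonzero $D$-submodules of $K$. A semistar operation on $D$ is a map $\star:\overline{\mathcal{F}}(D)\to\overline{\mathcal{F}}(D)$ with $(xE)^\star=xE^\star$ for nonzero $x\in K$, $E\subseteq F\Rightarrow E^\star\subseteq F^\star$, and $E\subseteq E^\star=(E^\star)^\star$. $E^{\star_f}:=\bigcup\{F^\star:F\subseteq E\text{ nonzero finitely generated}\}$. For a semistar operation $\ast$, a nonzero ideal $I$ is a quasi-$\ast$-ideal if $I^\ast\cap D=I$; quasi-$\ast$-primes are prime quasi-$\ast$-ideals, quasi-$\ast$-maximal ideals are maximal among proper quasi-$\ast$-ideals. $E^{\widetilde\star}:=\bigcap\{ED_P:P\in\mathrm{QMax}^{\star_f}(D)\}$. For an indeterminate $X$: $\Theta:=\{Q\in\mathrm{Spec}(D[X]):Q\cap D=(0)\text{ or }(Q\cap D)^{\star_f}\subsetneq D^\star\}$, $\mathfrak S:=D[X][Y]\setminus\bigcup\{Q[Y]:Q\in\Theta\}$, and $E^{\star[X]}:=E[Y]_{\mathfrak S}\cap K(X)$ defines a semistar operation $\star[X]$ on $D[X]$, with $\widetilde\star[X]=\star[X]$. A domain $R$ with semistar operation $\ast$ is $\ast$-catenary if for each pair $P\subset Q$ of quasi-$\ast$-primes, any two saturated chains of quasi-$\ast$-primes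 between $P$ and $Q$ have the same finite length. For a semistar operation $\ast$ on $D$, $D$ is a $\ast$-strong S-domain if each pair of adjacent quasi-$\ast$-primes $P_1\subset P_2$ of $D$ extends to adjacent quasi-$\ast[X]$-primes $P_1[X]\subset P_2[X]$ of $D[X]$. *)

theory Defs
  imports "HOL-Computational_Algebra.Polynomial" "HOL-Computational_Algebra.Fraction_Field"
begin

text \<open>An integral domain D is represented as a subring of a field 'a which is its
quotient field (every element of 'a is a quotient of elements of D).\<close>

definition subring_of :: "'b::field set \<Rightarrow> bool" where
  "subring_of R \<longleftrightarrow> 0 \<in> R \<and> 1 \<in> R \<and> (\<forall>x\<in>R. \<forall>y\<in>R. x + y \<in> R \<and> x * y \<in> R \<and> - x \<in> R)"

definition domain_with_qf :: "'b::field set \<Rightarrow> bool" where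
  "domain_with_qf D \<longleftrightarrow> subring_of D \<and> (\<forall>x. \<exists>a\<in>D. \<exists>b\<in>D. b \<noteq> 0 \<and> x = a / b)"

definition submod :: "'b::field set \<Rightarrow> 'b set \<Rightarrow> bool" where
  "submod R E \<longleftrightarrow> 0 \<in> E \<and> (\<forall>x\<in>E. \<forall>y\<in>E. x + y \<in> E) \<and> (\<forall>r\<in>R. \<forall>x\<in>E. r * x \<in> E)"

definition Fbar :: "'b::field set \<Rightarrow> 'b set set" where
  "Fbar R = {E. submod R E \<and> E \<noteq> {0}}"

definition semistar :: "'b::field set \<Rightarrow> ('b set \<Rightarrow> 'b set) \<Rightarrow> bool" where
  "semistar R st \<longleftrightarrow>
     (\<forall>E\<in>Fbar R. st E \<in> Fbar R) \<and>
     (\<forall>x E. x \<noteq> 0 \<longrightarrow> E \<in> Fbar R \<longrightarrow> st ((\<lambda>e. x * e) ` E) = (\<lambda>e. x * e) ` st E) \<and>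
     (\<forall>E\<in>Fbar R. \<forall>F\<in>Fbar R. E \<subseteq> F \<longrightarrow> st E \<subseteq> st F) \<and>
     (\<forall>E\<in>Fbar R. E \<subseteq> st E \<and> st (st E) = st E)"

definition fin_gen :: "'b::field set \<Rightarrow> 'b set \<Rightarrow> bool" where
  "fin_gen R F \<longleftrightarrow> (\<exists>S. finite S \<and> F = {\<Sum>s\<in>S. r s * s | r. \<forall>s\<in>S. r s \<in> R})"

definition star_f :: "'b::field set \<Rightarrow> ('b set \<Rightarrow> 'b set) \<Rightarrow> 'b set \<Rightarrow> 'b set" where
  "star_f R st E = \<Union>{st F | F. F \<in> Fbar R \<and> fin_gen R F \<and> F \<subseteq> E}"

definition ideal_of :: "'b::field set \<Rightarrow> 'b set \<Rightarrow> bool" where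
  "ideal_of R I \<longleftrightarrow> I \<subseteq> R \<and> submod R I"

definition prime_ideal_of :: "'b::field set \<Rightarrow> 'b set \<Rightarrow> bool" where
  "prime_ideal_of R P \<longleftrightarrow> ideal_of R P \<and> P \<noteq> R \<and>
     (\<forall>a\<in>R. \<forall>b\<in>R. a * b \<in> P \<longrightarrow> a \<in> P \<or> b \<in> P)"

definition quasi_ideal :: "'b::field set \<Rightarrow> ('b set \<Rightarrow> 'b set) \<Rightarrow> 'b set \<Rightarrow> bool" where
  "quasi_ideal R st I \<longleftrightarrow> ideal_of R I \<and> I \<noteq> {0} \<and> st I \<inter> R = I"

definition quasi_prime :: "'b::field set \<Rightarrow> ('b set \<Rightarrow> 'b set) \<Rightarrow> 'b set \<Rightarrow> bool" where
  "quasi_prime R st P \<longleftrightarrow> quasi_ideal R st P \<and> prime_ideal_of R P"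

definition quasi_max :: "'b::field set \<Rightarrow> ('b set \<Rightarrow> 'b set) \<Rightarrow> 'b set \<Rightarrow> bool" where
  "quasi_max R st M \<longleftrightarrow> quasi_ideal R st M \<and> M \<noteq> R \<and>
     (\<forall>I. quasi_ideal R st I \<and> I \<noteq> R \<and> M \<subseteq> I \<longrightarrow> I = M)"

definition loc :: "'b::field set \<Rightarrow> 'b set \<Rightarrow> 'b set \<Rightarrow> 'b set" where
  "loc R P E = {e / s | e s. e \<in> E \<and> s \<in> R \<and> s \<notin> P}"

definition star_tilde :: "'b::field set \<Rightarrow> ('b set \<Rightarrow> 'b set) \<Rightarrow> 'b set \<Rightarrow> 'b set" where
  "star_tilde R st E = \<Inter>{loc R P E | P. quasi_max R (star_f R st) P}"

definition qprimes_between :: "'b::field set \<Rightarrow> ('b set \<Rightarrow> 'b set) \<Rightarrow> 'b set \<Rightarrow> 'b set \<Rightarrow> 'b set set" where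
  "qprimes_between R st P Q = {I. quasi_prime R st I \<and> P \<subseteq> I \<and> I \<subseteq> Q}"

definition is_chain_of :: "'c set set \<Rightarrow> bool" where
  "is_chain_of C \<longleftrightarrow> (\<forall>A\<in>C. \<forall>B\<in>C. A \<subseteq> B \<or> B \<subseteq> A)"

definition sat_chain :: "'b::field set \<Rightarrow> ('b set \<Rightarrow> 'b set) \<Rightarrow> 'b set \<Rightarrow> 'b set \<Rightarrow> 'b set set \<Rightarrow> bool" where
  "sat_chain R st P Q C \<longleftrightarrow> C \<subseteq> qprimes_between R st P Q \<and> P \<in> C \<and> Q \<in> C \<and> is_chain_of C \<and>
     (\<forall>C'. C \<subseteq> C' \<and> C' \<subseteq> qprimes_between R st P Q \<and> is_chain_of C' \<longrightarrow> C' = C)"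

definition star_catenary :: "'b::field set \<Rightarrow> ('b set \<Rightarrow> 'b set) \<Rightarrow> bool" where
  "star_catenary R st \<longleftrightarrow>
     (\<forall>P Q. quasi_prime R st P \<and> quasi_prime R st Q \<and> P \<subset> Q \<longrightarrow>
        (\<forall>C1 C2. sat_chain R st P Q C1 \<and> sat_chain R st P Q C2 \<longrightarrow>
           finite C1 \<and> finite C2 \<and> card C1 = card C2))"

definition adjacent_qprimes :: "'b::field set \<Rightarrow> ('b set \<Rightarrow> 'b set) \<Rightarrow> 'b set \<Rightarrow> 'b set \<Rightarrow> bool" where
  "adjacent_qprimes R st P1 P2 \<longleftrightarrow> quasi_prime R st P1 \<and> quasi_prime R st P2 \<and> P1 \<subset> P2 \<and>
     \<not> (\<exists>P. quasi_prime R st P \<and> P1 \<subset> P \<and> P \<subset> P2)"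

definition to_fract :: "'c::idom \<Rightarrow> 'c fract" where
  "to_fract x = Fract x 1"

text \<open>K(X) is the type 'a poly fract; D[X] is embedded via to_fract.\<close>
definition polyring :: "'a::field set \<Rightarrow> 'a poly fract set" where
  "polyring D = to_fract ` {p. \<forall>i. coeff p i \<in> D}"

definition ext_ideal :: "'a::field set \<Rightarrow> 'a poly fract set" where
  "ext_ideal P = to_fract ` {p. \<forall>i. coeff p i \<in> P}"

definition contr :: "'a::field set \<Rightarrow> 'a poly fract set \<Rightarrow> 'a set" where
  "contr D Q = {c \<in> D. to_fract [:c:] \<in> Q}"

definition Theta :: "'a::field set \<Rightarrow> ('a set \<Rightarrow> 'a set) \<Rightarrow> 'a poly fract set set" where
  "Theta D st = {Q. prime_ideal_of (polyring D) Q \<and>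
      (contr D Q = {0} \<or> star_f D st (contr D Q) \<subset> st D)}"

text \<open>The multiplicative set S of D[X][Y]; polynomials in Y over D[X] are 'a poly poly.\<close>
definition Smult :: "'a::field set \<Rightarrow> ('a set \<Rightarrow> 'a set) \<Rightarrow> 'a poly poly set" where
  "Smult D st = {s. (\<forall>i j. coeff (coeff s i) j \<in> D) \<and>
      (\<forall>Q\<in>Theta D st. \<exists>i. to_fract (coeff s i) \<notin> Q)}"

text \<open>E^{star[X]} = E[Y]_S \<inter> K(X): z in K(X) lies in E[Y]_S iff s z \<in> E[Y] for some s \<in> S,
i.e. every coefficient of s times z lies in E.\<close>
definition starX :: "'a::field set \<Rightarrow> ('a set \<Rightarrow> 'a set) \<Rightarrow> 'a poly fract set \<Rightarrow> 'a poly fract set" where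
  "starX D st E = {z. \<exists>s\<in>Smult D st. \<forall>i. to_fract (coeff s i) * z \<in> E}"

definition strong_S_domain :: "'a::field set \<Rightarrow> ('a set \<Rightarrow> 'a set) \<Rightarrow> bool" where
  "strong_S_domain D st \<longleftrightarrow>
     (\<forall>P1 P2. adjacent_qprimes D st P1 P2 \<longrightarrow>
        adjacent_qprimes (polyring D) (starX D st) (ext_ideal P1) (ext_ideal P2))"

end

theory Submission
  imports Defs
begin

text \<open>Let \<open>P\<^sub>1 \<subset> P\<^sub>2\<close> be adjacent quasi-\<open>\<star>\<close>-tilde-primes and \<open>M\<close> a
  quasi-\<open>\<star>\<^sub>f\<close>-maximal ideal containing \<open>P\<^sub>2\<close>. Every nonzero prime of \<open>D[X]\<close> whose
  contraction lies in \<open>M\<close> belongs to \<open>\<Theta>\<close> and is therefore a quasi-\<open>\<star>[X]\<close>-prime (for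
  \<open>\<star>\<close> as well as for \<open>\<star>\<close>-tilde). The chain \<open>P\<^sub>1[X] \<subset> (P\<^sub>1, X) \<subset> (P\<^sub>2, X)\<close>
  is saturated: a prime between \<open>P[X]\<close> and \<open>(P, X)\<close> is one of the two, and a prime between
  \<open>(P\<^sub>1, X)\<close> and \<open>(P\<^sub>2, X)\<close> is \<open>(J, X)\<close> for a quasi-\<open>\<star>\<close>-tilde-prime
  \<open>P\<^sub>1 \<subseteq> J \<subseteq> P\<^sub>2\<close>. A quasi-prime \<open>Q\<close> strictly between \<open>P\<^sub>1[X]\<close> and
  \<open>P\<^sub>2[X]\<close> would yield the longer chain \<open>P\<^sub>1[X] \<subset> Q \<subset> P\<^sub>2[X] \<subset> (P\<^sub>2, X)\<close>
  between the same ends, contradicting catenarity.\<close>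

section \<open>Subrings and ideals of a field\<close>

lemma subring_ofD:
  assumes "subring_of D"
  shows "0 \<in> D" "1 \<in> D" "x \<in> D \<Longrightarrow> y \<in> D \<Longrightarrow> x + y \<in> D"
    "x \<in> D \<Longrightarrow> y \<in> D \<Longrightarrow> x * y \<in> D" "x \<in> D \<Longrightarrow> - x \<in> D"
  using assms unfolding subring_of_def by blast+

lemma ideal_of_self: "subring_of D \<Longrightarrow> ideal_of D D"
  unfolding ideal_of_def submod_def subring_of_def by auto

lemma ideal_ofD:
  assumes "subring_of D" "ideal_of D P"
  shows "P \<subseteq> D" "0 \<in> P" "x \<in> P \<Longrightarrow> y \<in> P \<Longrightarrow> x + y \<in> P"
    "r \<in> D \<Longrightarrow> x \<in> P \<Longrightarrow> r * x \<in> P" "r \<in> D \<Longrightarrow> x \<in> P \<Longrightarrow> x * r \<in> P"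
    "x \<in> P \<Longrightarrow> - x \<in> P" "x \<in> P \<Longrightarrow> y \<in> P \<Longrightarrow> x - y \<in> P"
proof -
  have P: "P \<subseteq> D" "0 \<in> P" "\<And>x y. x \<in> P \<Longrightarrow> y \<in> P \<Longrightarrow> x + y \<in> P"
    "\<And>r x. r \<in> D \<Longrightarrow> x \<in> P \<Longrightarrow> r * x \<in> P"
    using assms(2) unfolding ideal_of_def submod_def by blast+
  have neg: "- x \<in> P" if "x \<in> P" for x
    using P(4)[OF _ that, of "- 1"] subring_ofD(2,5)[OF assms(1)] by simp
  show "P \<subseteq> D" "0 \<in> P" "x \<in> P \<Longrightarrow> y \<in> P \<Longrightarrow> x + y \<in> P"
    "r \<in> D \<Longrightarrow> x \<in> P \<Longrightarrow> r * x \<in> P" "x \<in> P \<Longrightarrow> - x \<in> P"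
    using P neg by blast+
  show "r \<in> D \<Longrightarrow> x \<in> P \<Longrightarrow> x * r \<in> P"
    using P(4)[of r x] by (simp add: mult.commute)
  show "x \<in> P \<Longrightarrow> y \<in> P \<Longrightarrow> x - y \<in> P"
    using P(3)[OF _ neg, of x y] by simp
qed

lemma ideal_sum_closed:
  assumes "subring_of D" "ideal_of D P" "\<And>k. k \<in> A \<Longrightarrow> f k \<in> P"
  shows "sum f A \<in> P"
  using assms(3) ideal_ofD(2,3)[OF assms(1,2)]
  by (induction A rule: infinite_finite_induct) auto

lemma prime_ideal_ofD:
  assumes "prime_ideal_of R P" "a \<in> R" "b \<in> R" "a * b \<in> P"
  shows "a \<in> P \<or> b \<in> P"
  using assms unfolding prime_ideal_of_def by blast

lemma one_not_in_proper_ideal: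
  assumes "ideal_of R I" "I \<noteq> R" "1 \<in> R"
  shows "1 \<notin> I"
proof
  assume "1 \<in> I"
  have "I \<subseteq> R" "\<forall>r\<in>R. \<forall>x\<in>I. r * x \<in> I"
    using assms(1) unfolding ideal_of_def submod_def by blast+
  with \<open>1 \<in> I\<close> have "R \<subseteq> I" by force
  with \<open>I \<subseteq> R\<close> assms(2) show False by blast
qed

lemma one_not_in_prime_ideal:
  assumes "subring_of D" "prime_ideal_of D P"
  shows "1 \<notin> P"
  using one_not_in_proper_ideal[of D P] assms subring_ofD(2)[OF assms(1)]
  unfolding prime_ideal_of_def by blast

section \<open>The polynomial ring \<open>D[X]\<close> inside \<open>K(X)\<close>\<close>

definition polys_over :: "'a::field set \<Rightarrow> 'a poly set" where
  "polys_over S = {p. \<forall>i. coeff p i \<in> S}"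

lemma polys_over_mono: "S \<subseteq> T \<Longrightarrow> polys_over S \<subseteq> polys_over T"
  unfolding polys_over_def by auto

lemma const_in_polys_over_iff: "[:c:] \<in> polys_over S \<longleftrightarrow> c \<in> S \<and> 0 \<in> S"
  unfolding polys_over_def by (auto simp: coeff_pCons split: nat.splits)

lemma pCons_in_polys_over_iff: "pCons a p \<in> polys_over S \<longleftrightarrow> a \<in> S \<and> p \<in> polys_over S"
  unfolding polys_over_def by (auto simp: coeff_pCons split: nat.splits)

lemma one_in_polys_over: "subring_of D \<Longrightarrow> 1 \<in> polys_over D"
  using subring_ofD(1,2) unfolding polys_over_def by (auto simp: coeff_1)

lemma X_in_polys_over: "subring_of D \<Longrightarrow> [:0, 1:] \<in> polys_over D"
  using subring_ofD(1,2) unfolding polys_over_def by (auto simp: coeff_pCons split: nat.splits)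

lemma polys_over_add:
  assumes "subring_of D" "ideal_of D P" "p \<in> polys_over P" "q \<in> polys_over P"
  shows "p + q \<in> polys_over P" "p - q \<in> polys_over P"
  using assms ideal_ofD(3,7)[OF assms(1,2)] unfolding polys_over_def by simp_all

lemma polys_over_uminus:
  assumes "subring_of D" "ideal_of D P" "p \<in> polys_over P"
  shows "- p \<in> polys_over P"
  using ideal_ofD(6)[OF assms(1,2)] assms(3) unfolding polys_over_def by simp

lemma polys_over_mult:
  assumes "subring_of D" "ideal_of D P" "r \<in> polys_over D" "p \<in> polys_over P"
  shows "r * p \<in> polys_over P"
proof -
  have "coeff r k * coeff p (n - k) \<in> P" for n k
    using assms(3,4) ideal_ofD(4)[OF assms(1,2)] unfolding polys_over_def by blast
  then show ?thesis
    unfolding polys_over_def by (simp add: coeff_mult ideal_sum_closed[OF assms(1,2)])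
qed

text \<open>Gauss: if neither factor lies in \<open>P[X]\<close>, the product of their lowest coefficients
  outside \<open>P\<close> is, modulo \<open>P\<close>, a coefficient of the product.\<close>

lemma polys_over_prime:
  assumes sub: "subring_of D" and pr: "prime_ideal_of D P"
    and f: "f \<in> polys_over D" and g: "g \<in> polys_over D" and fg: "f * g \<in> polys_over P"
  shows "f \<in> polys_over P \<or> g \<in> polys_over P"
proof (rule ccontr)
  assume "\<not> ?thesis"
  then have ex: "\<exists>k. coeff f k \<notin> P" "\<exists>k. coeff g k \<notin> P"
    unfolding polys_over_def by blast+
  define i where "i = (LEAST k. coeff f k \<notin> P)"
  define j where "j = (LEAST k. coeff g k \<notin> P)"
  have fi: "coeff f i \<notin> P" unfolding i_def using ex(1) by (rule LeastI_ex)
  have gj: "coeff g j \<notin> P" unfolding j_def using ex(2) by (rule LeastI_ex)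
  have below: "coeff f k \<in> P" if "k < i" for k
    using not_less_Least[OF that[unfolded i_def]] by blast
  have below': "coeff g k \<in> P" if "k < j" for k
    using not_less_Least[OF that[unfolded j_def]] by blast
  have idl: "ideal_of D P" using pr unfolding prime_ideal_of_def by blast
  note I = ideal_ofD[OF sub idl]
  define rest where "rest = (\<Sum>k\<in>{..i + j} - {i}. coeff f k * coeff g (i + j - k))"
  have split: "coeff (f * g) (i + j) = coeff f i * coeff g j + rest"
    unfolding rest_def coeff_mult by (subst sum.remove[of _ i]) auto
  have "rest \<in> P"
    unfolding rest_def
  proof (rule ideal_sum_closed[OF sub idl])
    fix k assume k: "k \<in> {..i + j} - {i}"
    show "coeff f k * coeff g (i + j - k) \<in> P"
    proof (cases "k < i")
      case True
      then show ?thesis using below g I(5) unfolding polys_over_def by blast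
    next
      case False
      then have "i + j - k < j" using k by auto
      then show ?thesis using below' f I(4) unfolding polys_over_def by blast
    qed
  qed
  moreover have "coeff (f * g) (i + j) \<in> P" using fg unfolding polys_over_def by blast
  ultimately have "coeff (f * g) (i + j) - rest \<in> P" by (rule I(7)[rotated])
  then have "coeff f i * coeff g j \<in> P" by (simp add: split)
  moreover have "coeff f i \<in> D" "coeff g j \<in> D" using f g unfolding polys_over_def by blast+
  ultimately show False using prime_ideal_ofD[OF pr] fi gj by blast
qed

lemma to_fract_simps [simp]:
  "to_fract (a + b) = to_fract a + to_fract b"
  "to_fract (a * b) = to_fract a * to_fract b"
  "to_fract (a - b) = to_fract a - to_fract b"
  "to_fract (- a) = - to_fract a"
  "to_fract 0 = 0" "to_fract 1 = 1"
  "to_fract a = to_fract b \<longleftrightarrow> a = b"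
  unfolding to_fract_def by (simp_all add: Zero_fract_def One_fract_def eq_fract)

lemma to_fract_eq_0_iff [simp]: "to_fract a = 0 \<longleftrightarrow> a = 0"
  using to_fract_simps(5,7) by metis

lemma to_fract_image_iff [simp]: "to_fract a \<in> to_fract ` A \<longleftrightarrow> a \<in> A"
  by (rule inj_image_mem_iff) (simp add: inj_def)

lemma polyring_eq: "polyring D = to_fract ` polys_over D"
  unfolding polyring_def polys_over_def by simp

lemma ext_ideal_eq: "ext_ideal P = to_fract ` polys_over P"
  unfolding ext_ideal_def polys_over_def by simp

lemma contr_image: "contr D (to_fract ` A) = {c \<in> D. [:c:] \<in> A}"
  unfolding contr_def by simp

lemma contr_mono: "A \<subseteq> B \<Longrightarrow> contr D A \<subseteq> contr D B"
  unfolding contr_def by blast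

abbreviation X_fract :: "'a::field poly fract" where
  "X_fract \<equiv> to_fract [:0, 1:]"

lemma to_fract_pCons: "to_fract (pCons a q) = to_fract [:a:] + X_fract * to_fract q"
proof -
  have "pCons a q = [:a:] + [:0, 1:] * q" by simp
  then show ?thesis by (simp only: to_fract_simps)
qed

lemma subring_of_polyring:
  assumes sub: "subring_of D"
  shows "subring_of (polyring D)"
proof -
  note D = ideal_of_self[OF sub]
  have "0 \<in> polys_over D" "1 \<in> polys_over D"
    using subring_ofD(1)[OF sub] one_in_polys_over[OF sub] unfolding polys_over_def by auto
  then have "0 \<in> to_fract ` polys_over D" "1 \<in> to_fract ` polys_over D"
    by (auto intro: image_eqI[rotated])
  moreover have "p + q \<in> polys_over D" "p * q \<in> polys_over D" "- p \<in> polys_over D"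
    if "p \<in> polys_over D" "q \<in> polys_over D" for p q
    using polys_over_add(1)[OF sub D that] polys_over_mult[OF sub D that]
      polys_over_uminus[OF sub D that(1)] by blast+
  ultimately show ?thesis
    unfolding subring_of_def polyring_eq
    by (auto simp flip: to_fract_simps(1,2,4))
qed

lemma X_in_polyring: "subring_of D \<Longrightarrow> X_fract \<in> polyring D"
  using X_in_polys_over unfolding polyring_eq by simp

lemma const_in_polyring: "subring_of D \<Longrightarrow> c \<in> D \<Longrightarrow> to_fract [:c:] \<in> polyring D"
  using subring_ofD(1) unfolding polyring_eq by (simp add: const_in_polys_over_iff)

lemma prime_ideal_of_polyringI:
  assumes sub: "subring_of D" and AD: "A \<subseteq> polys_over D" and zero: "0 \<in> A"
    and add: "\<And>a b. a \<in> A \<Longrightarrow> b \<in> A \<Longrightarrow> a + b \<in> A"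
    and mult: "\<And>r a. r \<in> polys_over D \<Longrightarrow> a \<in> A \<Longrightarrow> r * a \<in> A"
    and one: "1 \<notin> A"
    and prime: "\<And>f g. f \<in> polys_over D \<Longrightarrow> g \<in> polys_over D \<Longrightarrow> f * g \<in> A \<Longrightarrow> f \<in> A \<or> g \<in> A"
  shows "prime_ideal_of (polyring D) (to_fract ` A)"
proof -
  have "ideal_of (polyring D) (to_fract ` A)"
    unfolding ideal_of_def submod_def polyring_eq
    using AD zero add mult
    by (auto simp flip: to_fract_simps(1,2) intro: image_eqI[rotated])
  moreover have "to_fract ` A \<noteq> polyring D"
    using one one_in_polys_over[OF sub] unfolding polyring_eq by (metis to_fract_image_iff)
  moreover have "a \<in> to_fract ` A \<or> b \<in> to_fract ` A"
    if "a \<in> polyring D" "b \<in> polyring D" "a * b \<in> to_fract ` A" for a b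
    using that prime unfolding polyring_eq by (force simp flip: to_fract_simps(2))
  ultimately show ?thesis unfolding prime_ideal_of_def by blast
qed

lemma ext_ideal_prime:
  assumes sub: "subring_of D" and pr: "prime_ideal_of D P"
  shows "prime_ideal_of (polyring D) (ext_ideal P)"
  unfolding ext_ideal_eq
proof (rule prime_ideal_of_polyringI[OF sub])
  have idl: "ideal_of D P" using pr unfolding prime_ideal_of_def by blast
  note I = ideal_ofD[OF sub idl]
  show "polys_over P \<subseteq> polys_over D" by (rule polys_over_mono[OF I(1)])
  show "0 \<in> polys_over P" unfolding polys_over_def using I(2) by simp
  show "\<And>a b. a \<in> polys_over P \<Longrightarrow> b \<in> polys_over P \<Longrightarrow> a + b \<in> polys_over P"
    by (rule polys_over_add(1)[OF sub idl])
  show "\<And>r a. r \<in> polys_over D \<Longrightarrow> a \<in> polys_over P \<Longrightarrow> r * a \<in> polys_over P"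
    by (rule polys_over_mult[OF sub idl])
  show "1 \<notin> polys_over P"
    using one_not_in_prime_ideal[OF sub pr] unfolding polys_over_def by (auto intro!: exI[of _ 0])
  show "\<And>f g. f \<in> polys_over D \<Longrightarrow> g \<in> polys_over D \<Longrightarrow> f * g \<in> polys_over P
      \<Longrightarrow> f \<in> polys_over P \<or> g \<in> polys_over P"
    by (rule polys_over_prime[OF sub pr])
qed

definition X_ideal :: "'a::field set \<Rightarrow> 'a set \<Rightarrow> 'a poly fract set" where
  "X_ideal D P = to_fract ` {p \<in> polys_over D. coeff p 0 \<in> P}"

lemma X_ideal_prime:
  assumes sub: "subring_of D" and pr: "prime_ideal_of D P"
  shows "prime_ideal_of (polyring D) (X_ideal D P)"
  unfolding X_ideal_def
proof (rule prime_ideal_of_polyringI[OF sub])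
  have idl: "ideal_of D P" using pr unfolding prime_ideal_of_def by blast
  note I = ideal_ofD[OF sub idl] and D = ideal_of_self[OF sub]
  show "{p \<in> polys_over D. coeff p 0 \<in> P} \<subseteq> polys_over D" by blast
  show "0 \<in> {p \<in> polys_over D. coeff p 0 \<in> P}"
    using I(2) subring_ofD(1)[OF sub] unfolding polys_over_def by simp
  show "a + b \<in> {p \<in> polys_over D. coeff p 0 \<in> P}"
    if "a \<in> {p \<in> polys_over D. coeff p 0 \<in> P}" "b \<in> {p \<in> polys_over D. coeff p 0 \<in> P}" for a b
    using that polys_over_add(1)[OF sub D] I(3) by simp
  show "r * a \<in> {p \<in> polys_over D. coeff p 0 \<in> P}"
    if "r \<in> polys_over D" "a \<in> {p \<in> polys_over D. coeff p 0 \<in> P}" for r a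
    using that polys_over_mult[OF sub D] I(4) unfolding polys_over_def
    by (simp add: coeff_mult)
  show "1 \<notin> {p \<in> polys_over D. coeff p 0 \<in> P}"
    using one_not_in_prime_ideal[OF sub pr] by simp
  show "f \<in> {p \<in> polys_over D. coeff p 0 \<in> P} \<or> g \<in> {p \<in> polys_over D. coeff p 0 \<in> P}"
    if "f \<in> polys_over D" "g \<in> polys_over D" "f * g \<in> {p \<in> polys_over D. coeff p 0 \<in> P}" for f g
    using that prime_ideal_ofD[OF pr, of "coeff f 0" "coeff g 0"] unfolding polys_over_def
    by (simp add: coeff_mult)
qed

lemma contr_ext_ideal:
  assumes "subring_of D" "ideal_of D P"
  shows "contr D (ext_ideal P) = P"
  unfolding ext_ideal_eq contr_image const_in_polys_over_iff
  using ideal_ofD(1,2)[OF assms] by blast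

lemma contr_X_ideal:
  assumes "subring_of D" "ideal_of D P"
  shows "contr D (X_ideal D P) = P"
  unfolding X_ideal_def contr_image
  using ideal_ofD(1)[OF assms] subring_ofD(1)[OF assms(1)]
  by (auto simp: const_in_polys_over_iff)

lemma ext_ideal_mono: "P \<subseteq> Q \<Longrightarrow> ext_ideal P \<subseteq> ext_ideal Q"
  unfolding ext_ideal_eq using polys_over_mono by blast

lemma X_ideal_mono: "P \<subseteq> Q \<Longrightarrow> X_ideal D P \<subseteq> X_ideal D Q"
  unfolding X_ideal_def by blast

lemma ext_ideal_subset_X_ideal:
  assumes "subring_of D" "ideal_of D P"
  shows "ext_ideal P \<subseteq> X_ideal D P"
proof -
  have "polys_over P \<subseteq> {p \<in> polys_over D. coeff p 0 \<in> P}"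
    using polys_over_mono[OF ideal_ofD(1)[OF assms]] unfolding polys_over_def by blast
  then show ?thesis unfolding ext_ideal_eq X_ideal_def by (rule image_mono)
qed

lemma X_in_X_ideal:
  assumes "subring_of D" "ideal_of D P"
  shows "X_fract \<in> X_ideal D P"
  unfolding X_ideal_def using X_in_polys_over[OF assms(1)] ideal_ofD(2)[OF assms] by simp

lemma X_notin_ext_ideal:
  assumes "subring_of D" "prime_ideal_of D P"
  shows "X_fract \<notin> ext_ideal P"
proof -
  have "coeff [:0, 1:] 1 \<notin> P" using one_not_in_prime_ideal[OF assms] by simp
  then have "[:0, 1:] \<notin> polys_over P" unfolding polys_over_def by blast
  then show ?thesis unfolding ext_ideal_eq by simp
qed

lemma const_in_ext_ideal:
  assumes "subring_of D" "ideal_of D P" "c \<in> P"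
  shows "to_fract [:c:] \<in> ext_ideal P"
  unfolding ext_ideal_eq using ideal_ofD(2)[OF assms(1,2)] assms(3)
  by (simp add: const_in_polys_over_iff)

lemma ext_ideal_nonzero:
  assumes "subring_of D" "ideal_of D P" "P \<noteq> {0}"
  shows "ext_ideal P \<noteq> {0}" "X_ideal D P \<noteq> {0}"
proof -
  obtain c where "c \<in> P" "c \<noteq> 0" using assms(3) ideal_ofD(2)[OF assms(1,2)] by blast
  then have "to_fract [:c:] \<in> ext_ideal P" "to_fract [:c:] \<noteq> 0"
    using const_in_ext_ideal[OF assms(1,2)] by simp_all
  then show "ext_ideal P \<noteq> {0}" "X_ideal D P \<noteq> {0}"
    using ext_ideal_subset_X_ideal[OF assms(1,2)] by blast+
qed

lemma contr_prime:
  assumes sub: "subring_of D" and pr: "prime_ideal_of (polyring D) I"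
  shows "prime_ideal_of D (contr D I)"
proof -
  have idl: "ideal_of (polyring D) I" and ne: "I \<noteq> polyring D"
    using pr unfolding prime_ideal_of_def by blast+
  note I = ideal_ofD[OF subring_of_polyring[OF sub] idl]
  note cR = const_in_polyring[OF sub]
  have mem: "c \<in> contr D I \<longleftrightarrow> c \<in> D \<and> to_fract [:c:] \<in> I" for c
    unfolding contr_def by simp
  have const_mult: "to_fract [:a * b:] = to_fract [:a:] * to_fract [:b:]" for a b
    unfolding to_fract_def by (simp add: mult.commute)
  have const_add: "to_fract [:a + b:] = to_fract [:a:] + to_fract [:b:]" for a b
    unfolding to_fract_def by simp
  have "0 \<in> contr D I" using subring_ofD(1)[OF sub] I(2) by (simp add: mem)
  moreover have "x + y \<in> contr D I" if "x \<in> contr D I" "y \<in> contr D I" for x y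
    using that subring_ofD(3)[OF sub] I(3) by (simp add: mem const_add)
  moreover have "r * x \<in> contr D I" if "r \<in> D" "x \<in> contr D I" for r x
    using that subring_ofD(4)[OF sub] I(4)[OF cR] by (simp add: mem const_mult)
  moreover have "contr D I \<subseteq> D" unfolding contr_def by blast
  ultimately have "ideal_of D (contr D I)"
    unfolding ideal_of_def submod_def by blast
  moreover have "1 \<notin> I"
    using one_not_in_proper_ideal[OF idl ne subring_ofD(2)[OF subring_of_polyring[OF sub]]] .
  then have "1 \<notin> contr D I" by (simp add: mem flip: one_pCons)
  then have "contr D I \<noteq> D" using subring_ofD(2)[OF sub] by blast
  moreover have "a \<in> contr D I \<or> b \<in> contr D I"
    if "a \<in> D" "b \<in> D" "a * b \<in> contr D I" for a b
    using that prime_ideal_ofD[OF pr cR cR] by (simp add: mem const_mult)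
  ultimately show ?thesis unfolding prime_ideal_of_def by blast
qed

lemma ideal_containing_X_eq_X_ideal:
  assumes sub: "subring_of D" and idl: "ideal_of (polyring D) I" and XI: "X_fract \<in> I"
  shows "I = X_ideal D (contr D I)"
proof -
  note I = ideal_ofD[OF subring_of_polyring[OF sub] idl]
  have key: "to_fract f \<in> I \<longleftrightarrow> coeff f 0 \<in> contr D I" if f: "f \<in> polys_over D" for f
  proof (cases f rule: pCons_cases)
    case (pCons a q)
    with f have aD: "a \<in> D" and "to_fract q \<in> polyring D"
      unfolding polyring_eq by (simp_all add: pCons_in_polys_over_iff)
    then have XqI: "X_fract * to_fract q \<in> I" using I(5)[OF _ XI] by simp
    have f_eq: "to_fract f = to_fract [:a:] + X_fract * to_fract q"
      unfolding pCons by (rule to_fract_pCons)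
    have "to_fract f \<in> I \<longleftrightarrow> to_fract [:a:] \<in> I"
    proof
      assume "to_fract f \<in> I"
      from I(7)[OF this XqI] show "to_fract [:a:] \<in> I" using f_eq by simp
    next
      assume "to_fract [:a:] \<in> I"
      from I(3)[OF this XqI] show "to_fract f \<in> I" using f_eq by simp
    qed
    with aD show ?thesis unfolding pCons contr_def by simp
  qed
  have "I \<subseteq> to_fract ` polys_over D" using I(1) unfolding polyring_eq .
  with key show ?thesis unfolding X_ideal_def by auto
qed

lemma prime_between_ext_ideal_and_X_ideal:
  assumes sub: "subring_of D" and idl: "ideal_of D P" and pr: "prime_ideal_of (polyring D) I"
    and lower: "ext_ideal P \<subseteq> I" and upper: "I \<subseteq> X_ideal D P"
  shows "I = ext_ideal P \<or> I = X_ideal D P"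
proof (cases "X_fract \<in> I")
  case True
  have "contr D I = P"
    using contr_mono[OF lower, of D] contr_mono[OF upper, of D]
    unfolding contr_ext_ideal[OF sub idl] contr_X_ideal[OF sub idl] by blast
  with True show ?thesis
    using ideal_containing_X_eq_X_ideal[OF sub _ True] pr unfolding prime_ideal_of_def by simp
next
  case False
  have idlI: "ideal_of (polyring D) I" using pr unfolding prime_ideal_of_def by blast
  note I = ideal_ofD[OF subring_of_polyring[OF sub] idlI]
  have "f \<in> polys_over P" if "f \<in> polys_over D" "to_fract f \<in> I" for f
    using that
  proof (induction f rule: pCons_induct)
    case 0
    then show ?case using ideal_ofD(2)[OF sub idl] unfolding polys_over_def by simp
  next
    case (pCons a q)
    then have q: "q \<in> polys_over D" by (simp add: pCons_in_polys_over_iff)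
    have "to_fract (pCons a q) \<in> X_ideal D P" using pCons.prems(2) upper by blast
    then have aP: "a \<in> P" unfolding X_ideal_def by simp
    then have "to_fract [:a:] \<in> I" using const_in_ext_ideal[OF sub idl] lower by blast
    from I(7)[OF pCons.prems(2) this] have "X_fract * to_fract q \<in> I"
      using to_fract_pCons[of a q] by simp
    then have "to_fract q \<in> I"
      using prime_ideal_ofD[OF pr X_in_polyring[OF sub]] q False unfolding polyring_eq by simp
    with q have "q \<in> polys_over P" by (rule pCons.IH)
    with aP show ?case by (simp add: pCons_in_polys_over_iff)
  qed
  then have "I \<subseteq> ext_ideal P" using I(1) unfolding polyring_eq ext_ideal_eq by auto
  with lower show ?thesis by blast
qed

section \<open>Saturated chains\<close>

lemma saturated_chain_exists:
  assumes C0: "C0 \<subseteq> qprimes_between R st P Q" "is_chain_of C0" and PQ: "P \<in> C0" "Q \<in> C0"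
  shows "\<exists>C. C0 \<subseteq> C \<and> sat_chain R st P Q C"
proof -
  define A where "A = {C. C0 \<subseteq> C \<and> C \<subseteq> qprimes_between R st P Q \<and> is_chain_of C}"
  have "\<exists>M\<in>A. \<forall>X\<in>A. M \<subseteq> X \<longrightarrow> X = M"
  proof (rule subset_Zorn_nonempty)
    show "A \<noteq> {}" using C0 unfolding A_def by blast
  next
    fix \<C> assume ne: "\<C> \<noteq> {}" and ch: "subset.chain A \<C>"
    then have CA: "\<C> \<subseteq> A" and total: "\<And>X Y. X \<in> \<C> \<Longrightarrow> Y \<in> \<C> \<Longrightarrow> X \<subseteq> Y \<or> Y \<subseteq> X"
      unfolding subset_chain_def by blast+
    have chains: "\<And>X. X \<in> \<C> \<Longrightarrow> is_chain_of X" using CA unfolding A_def by blast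
    have "is_chain_of (\<Union>\<C>)"
      unfolding is_chain_of_def
    proof (intro ballI)
      fix x y assume "x \<in> \<Union>\<C>" "y \<in> \<Union>\<C>"
      then obtain X Y where XY: "X \<in> \<C>" "Y \<in> \<C>" and "x \<in> X" "y \<in> Y" by blast
      then have "x \<in> X \<union> Y" "y \<in> X \<union> Y" by blast+
      moreover have "is_chain_of (X \<union> Y)"
        using total[OF XY] chains[OF XY(1)] chains[OF XY(2)] by (metis sup.absorb1 sup.absorb2)
      ultimately show "x \<subseteq> y \<or> y \<subseteq> x" unfolding is_chain_of_def by blast
    qed
    moreover have "C0 \<subseteq> \<Union>\<C>" using ne CA unfolding A_def by blast
    moreover have "\<Union>\<C> \<subseteq> qprimes_between R st P Q" using CA unfolding A_def by blast
    ultimately show "\<Union>\<C> \<in> A" unfolding A_def by blast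
  qed
  then obtain C where C: "C0 \<subseteq> C" "C \<subseteq> qprimes_between R st P Q" "is_chain_of C"
    and max: "\<And>C'. C \<subseteq> C' \<Longrightarrow> C' \<subseteq> qprimes_between R st P Q \<Longrightarrow> is_chain_of C' \<Longrightarrow> C' = C"
    unfolding A_def by (metis (no_types, lifting) mem_Collect_eq order_trans)
  have "sat_chain R st P Q C"
    unfolding sat_chain_def using C max PQ by blast
  with C(1) show ?thesis by blast
qed

lemma star_catenary_card_le:
  assumes cat: "star_catenary R st" and sat: "sat_chain R st P Q C" and PQ: "P \<subset> Q"
    and C0: "C0 \<subseteq> qprimes_between R st P Q" "is_chain_of C0"
  shows "finite C0 \<and> card C0 \<le> card C"
proof -
  have ends: "P \<in> qprimes_between R st P Q" "Q \<in> qprimes_between R st P Q"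
    using sat unfolding sat_chain_def by blast+
  then have "quasi_prime R st P" "quasi_prime R st Q" unfolding qprimes_between_def by blast+
  with cat PQ have all_sat: "\<forall>C1 C2. sat_chain R st P Q C1 \<and> sat_chain R st P Q C2
      \<longrightarrow> finite C1 \<and> finite C2 \<and> card C1 = card C2"
    unfolding star_catenary_def by blast
  have "insert P (insert Q C0) \<subseteq> qprimes_between R st P Q"
    using C0(1) ends by blast
  moreover have "is_chain_of (insert P (insert Q C0))"
    unfolding is_chain_of_def
  proof (intro ballI)
    have bounds: "P \<subseteq> Z \<and> Z \<subseteq> Q" if "Z \<in> insert P (insert Q C0)" for Z
      using that C0(1) ends unfolding qprimes_between_def by blast
    fix x y assume x: "x \<in> insert P (insert Q C0)" and y: "y \<in> insert P (insert Q C0)"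
    show "x \<subseteq> y \<or> y \<subseteq> x"
    proof (cases "x \<in> C0 \<and> y \<in> C0")
      case True
      with C0(2) show ?thesis unfolding is_chain_of_def by blast
    next
      case False
      with x y bounds[OF x] bounds[OF y] show ?thesis by blast
    qed
  qed
  ultimately obtain C' where C': "C0 \<subseteq> C'" "sat_chain R st P Q C'"
    using saturated_chain_exists[of "insert P (insert Q C0)" R st P Q] by blast
  from all_sat sat C'(2) have "finite C'" "card C = card C'" by blast+
  with C'(1) show ?thesis using card_mono[of C' C0] finite_subset[of C0 C'] by simp
qed

section \<open>The operations \<open>\<star>\<close>-tilde and \<open>\<star>[X]\<close>\<close>

lemma quasi_maxD:
  assumes "quasi_max D st M"
  shows "ideal_of D M" "M \<noteq> D" "st M \<inter> D = M" "0 \<in> M" "M \<subseteq> D"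
proof -
  have "quasi_ideal D st M" "M \<noteq> D" using assms unfolding quasi_max_def by blast+
  then show "ideal_of D M" "M \<noteq> D" "st M \<inter> D = M" unfolding quasi_ideal_def by blast+
  then show "0 \<in> M" "M \<subseteq> D" unfolding ideal_of_def submod_def by blast+
qed

lemma one_notin_quasi_max:
  assumes "subring_of D" "quasi_max D st M"
  shows "1 \<notin> M"
  using one_not_in_proper_ideal[OF quasi_maxD(1,2)[OF assms(2)] subring_ofD(2)[OF assms(1)]] .

lemma loc_mono: "E \<subseteq> F \<Longrightarrow> loc D M E \<subseteq> loc D M F"
  unfolding loc_def by blast

lemma star_tilde_subset_loc:
  "quasi_max D (star_f D st) M \<Longrightarrow> star_tilde D st E \<subseteq> loc D M E"
  unfolding star_tilde_def by blast

lemma star_tilde_mono: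
  assumes "E \<subseteq> F"
  shows "star_tilde D st E \<subseteq> star_tilde D st F"
proof -
  have "star_tilde D st E \<subseteq> loc D M F" if "quasi_max D (star_f D st) M" for M
    using star_tilde_subset_loc[OF that] loc_mono[OF assms] by blast
  then show ?thesis unfolding star_tilde_def by blast
qed

lemma subset_star_tilde:
  assumes sub: "subring_of D"
  shows "E \<subseteq> star_tilde D st E"
proof
  fix e assume e: "e \<in> E"
  have "e \<in> loc D M E" if "quasi_max D (star_f D st) M" for M
    using e subring_ofD(2)[OF sub] one_notin_quasi_max[OF sub that]
    unfolding loc_def mem_Collect_eq by (intro exI[of _ e] exI[of _ 1]) simp
  then show "e \<in> star_tilde D st E" unfolding star_tilde_def by blast
qed

text \<open>If \<open>P\<close> avoided every quasi-\<open>\<star>\<^sub>f\<close>-maximal \<open>M\<close>, then \<open>P D\<^sub>M = D\<^sub>M\<close> for all of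
  them, so the \<open>\<star>\<close>-tilde closure of \<open>P\<close> would contain \<open>D\<close>.\<close>

lemma star_tilde_quasi_ideal_in_quasi_max:
  assumes sub: "subring_of D" and q: "quasi_ideal D (star_tilde D st) P" and ne: "P \<noteq> D"
  shows "\<exists>M. quasi_max D (star_f D st) M \<and> P \<subseteq> M"
proof (rule ccontr)
  assume none: "\<not> ?thesis"
  have idl: "ideal_of D P" and eq: "star_tilde D st P \<inter> D = P"
    using q unfolding quasi_ideal_def by blast+
  note I = ideal_ofD[OF sub idl]
  have "d \<in> loc D M P" if d: "d \<in> D" and qm: "quasi_max D (star_f D st) M" for d M
  proof -
    obtain p where p: "p \<in> P" "p \<notin> M" using none qm by blast
    then have "p \<noteq> 0" using quasi_maxD(4)[OF qm] by blast
    then have "d = (d * p) / p" by simp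
    then show ?thesis unfolding loc_def using I(1,4) d p by blast
  qed
  then have "D \<subseteq> star_tilde D st P" unfolding star_tilde_def by blast
  with eq I(1) ne show False by blast
qed

lemma prime_in_quasi_max_quasi_prime_tilde:
  assumes sub: "subring_of D" and qm: "quasi_max D (star_f D st) M"
    and pr: "prime_ideal_of D J" and nz: "J \<noteq> {0}" and JM: "J \<subseteq> M"
  shows "quasi_prime D (star_tilde D st) J"
proof -
  have idl: "ideal_of D J" using pr unfolding prime_ideal_of_def by blast
  have "z \<in> J" if z: "z \<in> D" "z \<in> loc D M J" for z
  proof -
    obtain e s where "z = e / s" "e \<in> J" "s \<in> D" "s \<notin> M"
      using z(2) unfolding loc_def by blast
    moreover from this have "s \<noteq> 0" using quasi_maxD(4)[OF qm] by blast
    ultimately have "z * s \<in> J" "s \<notin> J" using JM by auto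
    then show "z \<in> J" using prime_ideal_ofD[OF pr z(1) \<open>s \<in> D\<close>] by blast
  qed
  then have "star_tilde D st J \<inter> D = J"
    using star_tilde_subset_loc[OF qm] subset_star_tilde[OF sub] ideal_ofD(1)[OF sub idl] by blast
  then show ?thesis unfolding quasi_prime_def quasi_ideal_def using idl nz pr by blast
qed

lemma star_f_psubset_star:
  assumes sub: "subring_of D" and sem: "semistar D st"
    and qm: "quasi_max D (star_f D st) M" and PM: "P \<subseteq> M"
  shows "star_f D st P \<subset> st D"
proof -
  have DF: "D \<in> Fbar D"
    using ideal_of_self[OF sub] subring_ofD(2)[OF sub] unfolding Fbar_def ideal_of_def by force
  have mono: "\<And>E F. E \<in> Fbar D \<Longrightarrow> F \<in> Fbar D \<Longrightarrow> E \<subseteq> F \<Longrightarrow> st E \<subseteq> st F"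
    and ext: "\<And>E. E \<in> Fbar D \<Longrightarrow> E \<subseteq> st E"
    using sem unfolding semistar_def by blast+
  have "star_f D st P \<subseteq> st D"
  proof
    fix x assume "x \<in> star_f D st P"
    then obtain F where F: "F \<in> Fbar D" "F \<subseteq> P" "x \<in> st F" unfolding star_f_def by blast
    with PM quasi_maxD(5)[OF qm] have "F \<subseteq> D" by blast
    with mono[OF F(1) DF] F(3) show "x \<in> st D" by blast
  qed
  moreover have "1 \<in> st D" using ext[OF DF] subring_ofD(2)[OF sub] by blast
  moreover have "1 \<notin> star_f D st P"
  proof
    assume "1 \<in> star_f D st P"
    then have "1 \<in> star_f D st M" using PM unfolding star_f_def by blast
    then show False
      using quasi_maxD(3)[OF qm] subring_ofD(2)[OF sub] one_notin_quasi_max[OF sub qm] by blast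
  qed
  ultimately show ?thesis by blast
qed

lemma star_f_star_tilde_psubset:
  assumes sub: "subring_of D" and qm: "quasi_max D (star_f D st) M" and PM: "P \<subseteq> M"
  shows "star_f D (star_tilde D st) P \<subset> star_tilde D st D"
proof -
  have "star_f D (star_tilde D st) P \<subseteq> star_tilde D st D"
    unfolding star_f_def using PM quasi_maxD(5)[OF qm] star_tilde_mono[of _ D D st]
    by blast
  moreover have "1 \<in> star_tilde D st D" using subset_star_tilde[OF sub] subring_ofD(2)[OF sub] by blast
  moreover have "1 \<notin> star_f D (star_tilde D st) P"
  proof
    assume "1 \<in> star_f D (star_tilde D st) P"
    then obtain F where F: "F \<subseteq> P" "1 \<in> star_tilde D st F" unfolding star_f_def by blast
    then have "1 \<in> loc D M F" using star_tilde_subset_loc[OF qm] by blast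
    then obtain e s where es: "1 = e / s" "e \<in> F" "s \<notin> M" unfolding loc_def by blast
    then have "s \<noteq> 0" using quasi_maxD(4)[OF qm] by blast
    with es(1) have "e = s" by (simp add: field_simps)
    with es F(1) PM show False by blast
  qed
  ultimately show ?thesis by blast
qed

lemma one_in_Smult:
  assumes sub: "subring_of D"
  shows "1 \<in> Smult D st"
proof -
  have "coeff (coeff (1 :: 'a poly poly) i) j \<in> D" for i j
    using subring_ofD(1,2)[OF sub] by (simp add: coeff_1)
  moreover have "to_fract (coeff 1 0) \<notin> Q" if "Q \<in> Theta D st" for Q
  proof -
    have "prime_ideal_of (polyring D) Q" using that unfolding Theta_def by blast
    then have "1 \<notin> Q"
      using one_not_in_proper_ideal[OF _ _ subring_ofD(2)[OF subring_of_polyring[OF sub]]]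
      unfolding prime_ideal_of_def by blast
    then show ?thesis by simp
  qed
  ultimately show ?thesis unfolding Smult_def by blast
qed

lemma subset_starX:
  assumes sub: "subring_of D" and "0 \<in> E"
  shows "E \<subseteq> starX D st E"
proof
  fix z assume "z \<in> E"
  with assms(2) have "\<forall>i. to_fract (coeff 1 i) * z \<in> E" by (simp add: coeff_1)
  with one_in_Smult[OF sub] show "z \<in> starX D st E" unfolding starX_def by blast
qed

lemma Theta_quasi_prime:
  assumes sub: "subring_of D" and th: "Q \<in> Theta D st" and nz: "Q \<noteq> {0}"
  shows "quasi_prime (polyring D) (starX D st) Q"
proof -
  have pr: "prime_ideal_of (polyring D) Q" using th unfolding Theta_def by blast
  then have idl: "ideal_of (polyring D) Q" unfolding prime_ideal_of_def by blast
  note I = ideal_ofD[OF subring_of_polyring[OF sub] idl]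
  have "z \<in> Q" if z: "z \<in> starX D st Q" "z \<in> polyring D" for z
  proof -
    obtain s where s: "s \<in> Smult D st" "\<forall>i. to_fract (coeff s i) * z \<in> Q"
      using z(1) unfolding starX_def by blast
    then obtain i where i: "to_fract (coeff s i) \<notin> Q" using th unfolding Smult_def by blast
    have "coeff s i \<in> polys_over D" using s(1) unfolding Smult_def polys_over_def by blast
    then have "to_fract (coeff s i) \<in> polyring D" unfolding polyring_eq by simp
    with prime_ideal_ofD[OF pr this z(2)] s(2) i show "z \<in> Q" by blast
  qed
  then have "starX D st Q \<inter> polyring D = Q" using subset_starX[OF sub I(2)] I(1) by blast
  then show ?thesis unfolding quasi_prime_def quasi_ideal_def using idl nz pr by blast
qed

lemma quasi_prime_starXI:
  assumes sub: "subring_of D" and sem: "semistar D st" and qm: "quasi_max D (star_f D st) M"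
    and pr: "prime_ideal_of (polyring D) Q" and nz: "Q \<noteq> {0}" and QM: "contr D Q \<subseteq> M"
  shows "quasi_prime (polyring D) (starX D st) Q"
  using Theta_quasi_prime[OF sub _ nz] pr star_f_psubset_star[OF sub sem qm QM]
  unfolding Theta_def by blast

lemma quasi_prime_starX_star_tildeI:
  assumes sub: "subring_of D" and qm: "quasi_max D (star_f D st) M"
    and pr: "prime_ideal_of (polyring D) Q" and nz: "Q \<noteq> {0}" and QM: "contr D Q \<subseteq> M"
  shows "quasi_prime (polyring D) (starX D (star_tilde D st)) Q"
  using Theta_quasi_prime[OF sub _ nz] pr star_f_star_tilde_psubset[OF sub qm QM]
  unfolding Theta_def by blast

section \<open>Adjacent quasi-primes and their extensions\<close>

lemma adjacent_qprimesD:
  assumes "adjacent_qprimes D st P1 P2"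
  shows "prime_ideal_of D P1" "prime_ideal_of D P2" "ideal_of D P1" "ideal_of D P2"
    "P1 \<noteq> {0}" "P2 \<noteq> {0}" "P1 \<subset> P2"
    "\<And>J. quasi_prime D st J \<Longrightarrow> P1 \<subseteq> J \<Longrightarrow> J \<subseteq> P2 \<Longrightarrow> J = P1 \<or> J = P2"
proof -
  have "quasi_prime D st P1" "quasi_prime D st P2" "P1 \<subset> P2"
    and none: "\<not> (\<exists>P. quasi_prime D st P \<and> P1 \<subset> P \<and> P \<subset> P2)"
    using assms unfolding adjacent_qprimes_def by blast+
  then show "prime_ideal_of D P1" "prime_ideal_of D P2" "ideal_of D P1" "ideal_of D P2"
    "P1 \<noteq> {0}" "P2 \<noteq> {0}" "P1 \<subset> P2"
    unfolding quasi_prime_def quasi_ideal_def by blast+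
  show "J = P1 \<or> J = P2" if "quasi_prime D st J" "P1 \<subseteq> J" "J \<subseteq> P2" for J
    using none that by (metis psubsetI)
qed

lemma ext_ideal_psubset:
  assumes "subring_of D" "ideal_of D P1" "ideal_of D P2" "P1 \<subset> P2"
  shows "ext_ideal P1 \<subset> ext_ideal P2"
proof -
  have "ext_ideal P1 \<noteq> ext_ideal P2"
  proof
    assume "ext_ideal P1 = ext_ideal P2"
    then have "contr D (ext_ideal P1) = contr D (ext_ideal P2)" by simp
    with assms(4) show False
      unfolding contr_ext_ideal[OF assms(1,2)] contr_ext_ideal[OF assms(1,3)] by blast
  qed
  with ext_ideal_mono[of P1 P2] assms(4) show ?thesis by blast
qed

lemma ext_ideal_psubset_X_ideal:
  assumes "subring_of D" "prime_ideal_of D P"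
  shows "ext_ideal P \<subset> X_ideal D P"
proof -
  have idl: "ideal_of D P" using assms(2) unfolding prime_ideal_of_def by blast
  show ?thesis
    using ext_ideal_subset_X_ideal[OF assms(1) idl] X_in_X_ideal[OF assms(1) idl]
      X_notin_ext_ideal[OF assms] by blast
qed

lemma ext_ideal_quasi_prime_starX:
  assumes sub: "subring_of D" and sem: "semistar D st" and qm: "quasi_max D (star_f D st) M"
    and pr: "prime_ideal_of D P" and nz: "P \<noteq> {0}" and PM: "P \<subseteq> M"
  shows "quasi_prime (polyring D) (starX D st) (ext_ideal P)"
    "quasi_prime (polyring D) (starX D st) (X_ideal D P)"
proof -
  have idl: "ideal_of D P" using pr unfolding prime_ideal_of_def by blast
  show "quasi_prime (polyring D) (starX D st) (ext_ideal P)"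
    using quasi_prime_starXI[OF sub sem qm ext_ideal_prime[OF sub pr]
        ext_ideal_nonzero(1)[OF sub idl nz]] contr_ext_ideal[OF sub idl] PM by simp
  show "quasi_prime (polyring D) (starX D st) (X_ideal D P)"
    using quasi_prime_starXI[OF sub sem qm X_ideal_prime[OF sub pr]
        ext_ideal_nonzero(2)[OF sub idl nz]] contr_X_ideal[OF sub idl] PM by simp
qed

lemma ext_ideal_quasi_prime_starX_star_tilde:
  assumes sub: "subring_of D" and qm: "quasi_max D (star_f D st) M"
    and pr: "prime_ideal_of D P" and nz: "P \<noteq> {0}" and PM: "P \<subseteq> M"
  shows "quasi_prime (polyring D) (starX D (star_tilde D st)) (ext_ideal P)"
proof -
  have idl: "ideal_of D P" using pr unfolding prime_ideal_of_def by blast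
  show ?thesis
    using quasi_prime_starX_star_tildeI[OF sub qm ext_ideal_prime[OF sub pr]
        ext_ideal_nonzero(1)[OF sub idl nz]] contr_ext_ideal[OF sub idl] PM by simp
qed

lemma prime_between_X_ideals:
  assumes sub: "subring_of D" and qm: "quasi_max D (star_f D st) M"
    and adj: "adjacent_qprimes D (star_tilde D st) P1 P2" and P2M: "P2 \<subseteq> M"
    and pr: "prime_ideal_of (polyring D) I"
    and lower: "X_ideal D P1 \<subseteq> I" and upper: "I \<subseteq> X_ideal D P2"
  shows "I = X_ideal D P1 \<or> I = X_ideal D P2"
proof -
  note P = adjacent_qprimesD[OF adj]
  have idlI: "ideal_of (polyring D) I" using pr unfolding prime_ideal_of_def by blast
  define J where "J = contr D I"
  have I_eq: "I = X_ideal D J"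
    unfolding J_def using ideal_containing_X_eq_X_ideal[OF sub idlI] X_in_X_ideal[OF sub P(3)] lower
    by blast
  have P1J: "P1 \<subseteq> J" and JP2: "J \<subseteq> P2"
    unfolding J_def using contr_mono[OF lower, of D] contr_mono[OF upper, of D]
    by (simp_all add: contr_X_ideal[OF sub P(3)] contr_X_ideal[OF sub P(4)])
  have "J \<noteq> {0}" using P1J P(5) ideal_ofD(2)[OF sub P(3)] by blast
  then have "quasi_prime D (star_tilde D st) J"
    using prime_in_quasi_max_quasi_prime_tilde[OF sub qm contr_prime[OF sub pr]] JP2 P2M
    unfolding J_def by blast
  with P(8) P1J JP2 I_eq show ?thesis by blast
qed

lemma saturated_chain_ext_X_X:
  assumes sub: "subring_of D" and sem: "semistar D st" and qm: "quasi_max D (star_f D st) M"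
    and adj: "adjacent_qprimes D (star_tilde D st) P1 P2" and P2M: "P2 \<subseteq> M"
  shows "sat_chain (polyring D) (starX D st) (ext_ideal P1) (X_ideal D P2)
      {ext_ideal P1, X_ideal D P1, X_ideal D P2}"
proof -
  note P = adjacent_qprimesD[OF adj]
  have P1M: "P1 \<subseteq> M" using P(7) P2M by blast
  define S where "S = qprimes_between (polyring D) (starX D st) (ext_ideal P1) (X_ideal D P2)"
  have E1X1: "ext_ideal P1 \<subseteq> X_ideal D P1" by (rule ext_ideal_subset_X_ideal[OF sub P(3)])
  have X1X2: "X_ideal D P1 \<subseteq> X_ideal D P2" using X_ideal_mono P(7) by blast
  have "{ext_ideal P1, X_ideal D P1, X_ideal D P2} \<subseteq> S"
    unfolding S_def qprimes_between_def
    using ext_ideal_quasi_prime_starX[OF sub sem qm P(1,5) P1M]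
      ext_ideal_quasi_prime_starX(2)[OF sub sem qm P(2,6) P2M] E1X1 X1X2 by blast
  moreover have "is_chain_of {ext_ideal P1, X_ideal D P1, X_ideal D P2}"
    unfolding is_chain_of_def using E1X1 X1X2 by blast
  moreover have "C' = {ext_ideal P1, X_ideal D P1, X_ideal D P2}"
    if C': "{ext_ideal P1, X_ideal D P1, X_ideal D P2} \<subseteq> C'" "C' \<subseteq> S" "is_chain_of C'" for C'
  proof -
    have "I \<in> {ext_ideal P1, X_ideal D P1, X_ideal D P2}" if I: "I \<in> C'" for I
    proof -
      have pr: "prime_ideal_of (polyring D) I" and EI: "ext_ideal P1 \<subseteq> I" and IX: "I \<subseteq> X_ideal D P2"
        using I C'(2) unfolding S_def qprimes_between_def quasi_prime_def by blast+
      have "I \<subseteq> X_ideal D P1 \<or> X_ideal D P1 \<subseteq> I"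
        using C'(1,3) I unfolding is_chain_of_def by blast
      then show ?thesis
        using prime_between_ext_ideal_and_X_ideal[OF sub P(3) pr EI]
          prime_between_X_ideals[OF sub qm adj P2M pr _ IX] by blast
    qed
    with C'(1) show ?thesis by blast
  qed
  ultimately show ?thesis unfolding sat_chain_def S_def by blast
qed

lemma no_quasi_prime_between_ext_ideals:
  assumes sub: "subring_of D" and sem: "semistar D st"
    and cat: "star_catenary (polyring D) (starX D st)"
    and qm: "quasi_max D (star_f D st) M"
    and adj: "adjacent_qprimes D (star_tilde D st) P1 P2" and P2M: "P2 \<subseteq> M"
    and Q: "quasi_prime (polyring D) (starX D (star_tilde D st)) Q"
    and lower: "ext_ideal P1 \<subset> Q" and upper: "Q \<subset> ext_ideal P2"
  shows False
proof -
  note P = adjacent_qprimesD[OF adj]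
  have P1M: "P1 \<subseteq> M" using P(7) P2M by blast
  have E2X2: "ext_ideal P2 \<subset> X_ideal D P2" by (rule ext_ideal_psubset_X_ideal[OF sub P(2)])
  have prQ: "prime_ideal_of (polyring D) Q" and nzQ: "Q \<noteq> {0}"
    using Q unfolding quasi_prime_def quasi_ideal_def by blast+
  have "contr D Q \<subseteq> M"
    using contr_mono[of Q "ext_ideal P2" D] upper P2M contr_ext_ideal[OF sub P(4)] by blast
  note qQ = quasi_prime_starXI[OF sub sem qm prQ nzQ this]
  define C where "C = {ext_ideal P1, Q, ext_ideal P2, X_ideal D P2}"
  have "C \<subseteq> qprimes_between (polyring D) (starX D st) (ext_ideal P1) (X_ideal D P2)"
    unfolding C_def qprimes_between_def
    using ext_ideal_quasi_prime_starX[OF sub sem qm P(1,5) P1M]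
      ext_ideal_quasi_prime_starX[OF sub sem qm P(2,6) P2M] qQ
      psubset_imp_subset[OF lower] psubset_imp_subset[OF upper] psubset_imp_subset[OF E2X2]
    by blast
  moreover have "is_chain_of C"
    unfolding C_def is_chain_of_def
    using psubset_imp_subset[OF lower] psubset_imp_subset[OF upper] psubset_imp_subset[OF E2X2]
    by blast
  moreover have "ext_ideal P1 \<subset> X_ideal D P2" using lower upper E2X2 by blast
  ultimately have "card C \<le> card {ext_ideal P1, X_ideal D P1, X_ideal D P2}"
    using star_catenary_card_le[OF cat saturated_chain_ext_X_X[OF sub sem qm adj P2M]] by blast
  also have "\<dots> \<le> 3" by (simp add: card_insert_le_m1)
  finally have "card C \<le> 3" .
  moreover have "ext_ideal P1 \<noteq> Q" "ext_ideal P1 \<noteq> ext_ideal P2" "ext_ideal P1 \<noteq> X_ideal D P2"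
    "Q \<noteq> ext_ideal P2" "Q \<noteq> X_ideal D P2" "ext_ideal P2 \<noteq> X_ideal D P2"
    using lower upper E2X2 by blast+
  then have "card C = 4" unfolding C_def by simp
  ultimately show False by simp
qed

theorem mainTheorem9:
  fixes D :: "'a::field set" and st :: "'a set \<Rightarrow> 'a set"
  assumes "domain_with_qf D"
    and "semistar D st"
    and "star_catenary (polyring D) (starX D st)"
  shows "strong_S_domain D (star_tilde D st)"
  unfolding strong_S_domain_def
proof (intro allI impI)
  fix P1 P2 assume adj: "adjacent_qprimes D (star_tilde D st) P1 P2"
  have sub: "subring_of D" using assms(1) unfolding domain_with_qf_def by blast
  note P = adjacent_qprimesD[OF adj]
  have "quasi_ideal D (star_tilde D st) P2" "P2 \<noteq> D"
    using adj P(2) unfolding adjacent_qprimes_def quasi_prime_def prime_ideal_of_def by blast+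
  then obtain M where qm: "quasi_max D (star_f D st) M" and P2M: "P2 \<subseteq> M"
    using star_tilde_quasi_ideal_in_quasi_max[OF sub] by blast
  show "adjacent_qprimes (polyring D) (starX D (star_tilde D st)) (ext_ideal P1) (ext_ideal P2)"
    unfolding adjacent_qprimes_def
    using ext_ideal_quasi_prime_starX_star_tilde[OF sub qm P(1,5)] P(7) P2M
      ext_ideal_quasi_prime_starX_star_tilde[OF sub qm P(2,6) P2M]
      ext_ideal_psubset[OF sub P(3,4,7)]
      no_quasi_prime_between_ext_ideals[OF sub assms(2,3) qm adj P2M] by blast
qed

end
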